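(* Let $\alpha\in(0,1)$ and let $f_n,g_n:[0,+\infty)\to\mathbb{R}$ ($n\in\mathbb{N}$) be functions such that: $f_n$ and $g_n$ are H\"older continuous of order $\alpha$ for every $n$; $g_n\to0$ uniformly on $[0,+\infty)$; and there exists $L\in\mathbb{R}$ with $|f_n(t_1)-f_n(t_2)|\le L|t_1-t_2|$ for all $n\in\mathbb{N}$ and all $t_1,t_2\ge0$. Then $$\limsup_{n\to+\infty}\operatorname{Hold}_\alpha(f_n+g_n)\le\max\Big\{\limsup_{n\to+\infty}\operatorname{Hold}_\alpha(f_n),\ \limsup_{n\to+\infty}\operatorname{Hold}_\alpha(g_n)\Big\}.$$
   Context: For $c:[0,+\infty)\to\mathbb{R}$, $\operatorname{Hold}_\alpha(c):=\sup\{|c(t)-c(s)|/|t-s|^\alpha:\ t,s\ge0,\ t\neq s\}$. *)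

theory Defs
  imports "HOL-Analysis.Analysis"
begin

definition Hold :: "real \<Rightarrow> (real \<Rightarrow> real) \<Rightarrow> ereal" where
  "Hold a c = (SUP p \<in> {(t, s). 0 \<le> t \<and> 0 \<le> s \<and> t \<noteq> s}.
      ereal (\<bar>c (fst p) - c (snd p)\<bar> / \<bar>fst p - snd p\<bar> powr a))"

definition holder_continuous :: "real \<Rightarrow> (real \<Rightarrow> real) \<Rightarrow> bool" where
  "holder_continuous a c \<longleftrightarrow> Hold a c < \<infinity>"

end

theory Submission
  imports Defs
begin

text \<open>Split the increments at a scale \<delta>: for |t - s| \<le> \<delta> the Lipschitz bound gives
  |f t - f s| / |t - s|^\<alpha> \<le> L \<delta>^(1-\<alpha>), small since \<alpha> < 1, so the quotient of f + g is at
  most Hold(g) plus a small error; for |t - s| > \<delta> the quotient of g is at most 2 sup|g| / \<delta>^\<alpha>,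
  which uniform convergence makes small, so that of f + g is at most Hold(f) plus a small error.\<close>

lemma Hold_ge:
  assumes "0 \<le> t" "0 \<le> s" "t \<noteq> s"
  shows "ereal (\<bar>c t - c s\<bar> / \<bar>t - s\<bar> powr a) \<le> Hold a c"
  unfolding Hold_def by (rule SUP_upper2[of "(t, s)"]) (use assms in auto)

lemma Hold_leI:
  assumes "\<And>t s. 0 \<le> t \<Longrightarrow> 0 \<le> s \<Longrightarrow> t \<noteq> s \<Longrightarrow> \<bar>c t - c s\<bar> / \<bar>t - s\<bar> powr a \<le> M"
  shows "Hold a c \<le> ereal M"
  unfolding Hold_def by (rule SUP_least) (use assms in auto)

lemma Hold_quotient_le:
  assumes "Hold a c \<le> ereal M" "0 \<le> t" "0 \<le> s" "t \<noteq> s"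
  shows "\<bar>c t - c s\<bar> / \<bar>t - s\<bar> powr a \<le> M"
  using order.trans[OF Hold_ge[OF assms(2-4)] assms(1)] by simp

lemma lipschitz_quotient_le:
  fixes f :: "real \<Rightarrow> real"
  assumes "\<alpha> \<le> 1" "0 \<le> L" "0 < \<bar>t - s\<bar>" "\<bar>t - s\<bar> \<le> \<delta>"
    and lip: "\<bar>f t - f s\<bar> \<le> L * \<bar>t - s\<bar>"
  shows "\<bar>f t - f s\<bar> / \<bar>t - s\<bar> powr \<alpha> \<le> L * \<delta> powr (1 - \<alpha>)"
proof -
  have "\<bar>f t - f s\<bar> / \<bar>t - s\<bar> powr \<alpha> \<le> L * \<bar>t - s\<bar> / \<bar>t - s\<bar> powr \<alpha>"
    using lip by (simp add: divide_right_mono)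
  also have "\<dots> = L * \<bar>t - s\<bar> powr (1 - \<alpha>)"
    using assms(3) by (simp add: powr_diff)
  also have "\<dots> \<le> L * \<delta> powr (1 - \<alpha>)"
    using assms by (intro mult_left_mono powr_mono2) auto
  finally show ?thesis .
qed

lemma bounded_quotient_le:
  fixes g :: "real \<Rightarrow> real"
  assumes "0 \<le> \<alpha>" "0 < \<delta>" "\<delta> < \<bar>t - s\<bar>" "\<bar>g t\<bar> \<le> m" "\<bar>g s\<bar> \<le> m"
  shows "\<bar>g t - g s\<bar> / \<bar>t - s\<bar> powr \<alpha> \<le> 2 * m / \<delta> powr \<alpha>"
proof -
  have "\<bar>g t - g s\<bar> / \<bar>t - s\<bar> powr \<alpha> \<le> 2 * m / \<bar>t - s\<bar> powr \<alpha>"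
    using assms(4,5) by (intro divide_right_mono) auto
  also have "\<dots> \<le> 2 * m / \<delta> powr \<alpha>"
    using assms by (intro divide_left_mono powr_mono2) auto
  finally show ?thesis .
qed

lemma Hold_add_le:
  fixes f g :: "real \<Rightarrow> real"
  assumes "0 \<le> \<alpha>" "\<alpha> \<le> 1" "0 < \<delta>" "0 \<le> L"
    and lip: "\<And>t s. 0 \<le> t \<Longrightarrow> 0 \<le> s \<Longrightarrow> \<bar>f t - f s\<bar> \<le> L * \<bar>t - s\<bar>"
    and bound: "\<And>t. 0 \<le> t \<Longrightarrow> \<bar>g t\<bar> \<le> m"
    and "Hold \<alpha> f \<le> ereal a" "Hold \<alpha> g \<le> ereal b"
  shows "Hold \<alpha> (\<lambda>t. f t + g t)
           \<le> ereal (max (b + L * \<delta> powr (1 - \<alpha>)) (a + 2 * m / \<delta> powr \<alpha>))"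
proof (rule Hold_leI)
  fix t s :: real assume ts: "0 \<le> t" "0 \<le> s" "t \<noteq> s"
  let ?q = "\<lambda>c. \<bar>c t - c s\<bar> / \<bar>t - s\<bar> powr \<alpha>"
  have sum: "?q (\<lambda>t. f t + g t) \<le> ?q f + ?q g"
    by (simp add: add_divide_distrib[symmetric] divide_right_mono)
  have hf: "?q f \<le> a" and hg: "?q g \<le> b"
    using Hold_quotient_le ts assms(7,8) by blast+
  show "?q (\<lambda>t. f t + g t) \<le> max (b + L * \<delta> powr (1 - \<alpha>)) (a + 2 * m / \<delta> powr \<alpha>)"
  proof (cases "\<bar>t - s\<bar> \<le> \<delta>")
    case True
    then have "?q f \<le> L * \<delta> powr (1 - \<alpha>)"
      using lipschitz_quotient_le[OF assms(2,4) _ True lip[OF ts(1,2)]] ts by simp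
    with sum hg show ?thesis by (intro max.coboundedI1) linarith
  next
    case False
    then have "?q g \<le> 2 * m / \<delta> powr \<alpha>"
      using bounded_quotient_le[OF assms(1,3)] bound ts by simp
    with sum hf show ?thesis by (intro max.coboundedI2) linarith
  qed
qed

lemma exists_scale_powr_le:
  fixes \<alpha> L e :: real
  assumes "\<alpha> < 1" "0 \<le> L" "0 < e"
  shows "\<exists>\<delta>>0. L * \<delta> powr (1 - \<alpha>) \<le> e"
proof -
  define \<delta> where "\<delta> = (e / (L + 1)) powr (1 / (1 - \<alpha>))"
  have "\<delta> powr (1 - \<alpha>) = e / (L + 1)"
    unfolding \<delta>_def using assms by (simp add: powr_powr)
  then have "L * \<delta> powr (1 - \<alpha>) \<le> e"
    using assms by (simp add: field_simps) (use powr_ge_zero[of \<delta> "1 - \<alpha>"] in linarith)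
  moreover have "0 < \<delta>" using assms by (simp add: \<delta>_def)
  ultimately show ?thesis by blast
qed

lemma eventually_Hold_add_le:
  fixes f g :: "'i \<Rightarrow> real \<Rightarrow> real"
  assumes "0 \<le> \<alpha>" "\<alpha> < 1" "0 \<le> L" "0 < e"
    and lip: "\<And>i t s. 0 \<le> t \<Longrightarrow> 0 \<le> s \<Longrightarrow> \<bar>f i t - f i s\<bar> \<le> L * \<bar>t - s\<bar>"
    and "uniform_limit {0..} g (\<lambda>_. 0) F"
    and "\<forall>\<^sub>F i in F. Hold \<alpha> (f i) \<le> ereal c"
    and "\<forall>\<^sub>F i in F. Hold \<alpha> (g i) \<le> ereal c"
  shows "\<forall>\<^sub>F i in F. Hold \<alpha> (\<lambda>t. f i t + g i t) \<le> ereal (c + e)"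
proof -
  obtain \<delta> where \<delta>: "0 < \<delta>" "L * \<delta> powr (1 - \<alpha>) \<le> e"
    using exists_scale_powr_le assms(2-4) by blast
  define m where "m = e * \<delta> powr \<alpha> / 2"
  have "0 < m" using assms(4) \<delta>(1) by (simp add: m_def)
  then have "\<forall>\<^sub>F i in F. \<forall>t\<in>{0..}. dist (g i t) 0 < m"
    using assms(6) unfolding uniform_limit_iff by blast
  with assms(7,8) show ?thesis
  proof eventually_elim
    case (elim i)
    then have "\<And>t. 0 \<le> t \<Longrightarrow> \<bar>g i t\<bar> \<le> m" by (auto simp: less_imp_le)
    from Hold_add_le[OF assms(1) _ \<delta>(1) assms(3) lip this elim(1,2)]
    have "Hold \<alpha> (\<lambda>t. f i t + g i t)
            \<le> ereal (max (c + L * \<delta> powr (1 - \<alpha>)) (c + 2 * m / \<delta> powr \<alpha>))"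
      using assms(2) by simp
    also have "\<dots> \<le> ereal (c + e)"
      using \<delta> by (simp add: m_def)
    finally show ?case .
  qed
qed

theorem mainTheorem4:
  fixes \<alpha> :: real and f g :: "nat \<Rightarrow> real \<Rightarrow> real"
  assumes "0 < \<alpha>" and "\<alpha> < 1"
    and "\<And>n. holder_continuous \<alpha> (f n)"
    and "\<And>n. holder_continuous \<alpha> (g n)"
    and "uniform_limit {0..} g (\<lambda>_. 0) sequentially"
    and "\<exists>L::real. \<forall>n t1 t2. 0 \<le> t1 \<longrightarrow> 0 \<le> t2 \<longrightarrow> \<bar>f n t1 - f n t2\<bar> \<le> L * \<bar>t1 - t2\<bar>"
  shows "limsup (\<lambda>n. Hold \<alpha> (\<lambda>t. f n t + g n t))
           \<le> max (limsup (\<lambda>n. Hold \<alpha> (f n))) (limsup (\<lambda>n. Hold \<alpha> (g n)))"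
proof (rule dense_ge)
  fix y assume y: "max (limsup (\<lambda>n. Hold \<alpha> (f n))) (limsup (\<lambda>n. Hold \<alpha> (g n))) < y"
  obtain L where L: "\<And>n t s. 0 \<le> t \<Longrightarrow> 0 \<le> s \<Longrightarrow> \<bar>f n t - f n s\<bar> \<le> max L 0 * \<bar>t - s\<bar>"
    using assms(6) by (meson abs_ge_zero max.cobounded1 mult_right_mono order.trans)
  obtain c where c: "max (limsup (\<lambda>n. Hold \<alpha> (f n))) (limsup (\<lambda>n. Hold \<alpha> (g n))) < ereal c"
    "ereal c < y"
    using ereal_dense2[OF y] by blast
  obtain d where d: "ereal c < ereal d" "ereal d < y"
    using ereal_dense2[OF c(2)] by blast
  have "\<forall>\<^sub>F n in sequentially. Hold \<alpha> (f n) \<le> ereal c" "\<forall>\<^sub>F n in sequentially. Hold \<alpha> (g n) \<le> ereal c"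
    using c(1) by (auto intro: eventually_mono[OF Limsup_lessD])
  then have "\<forall>\<^sub>F n in sequentially. Hold \<alpha> (\<lambda>t. f n t + g n t) \<le> ereal (c + (d - c))"
    using d(1) assms(1,2,5) by (intro eventually_Hold_add_le[OF _ _ _ _ L]) auto
  then have "limsup (\<lambda>n. Hold \<alpha> (\<lambda>t. f n t + g n t)) \<le> ereal d"
    by (intro Limsup_bounded) simp_all
  with d(2) show "limsup (\<lambda>n. Hold \<alpha> (\<lambda>t. f n t + g n t)) \<le> y" by simp
qed

end
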